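(* For $k\in\mathbb{N}$ let $c_k=\dfrac{3\,|B_{2k}|\,(2^{2k}-2)+(-1)^{k}}{(2k)!}$, where $B_{2k}$ denotes the Bernoulli number. For every $x\in(0,\pi/2)$ and every integer $m\ge 3$, $$4+\sum_{k=1}^{m-1}c_k x^{2k}+\Big(\frac{2x}{\pi}\Big)^{2m}\Big(\frac{3\pi}{2}-4-\sum_{k=1}^{m-1}c_k\Big(\frac{\pi}{2}\Big)^{2k}\Big)>3\,\frac{x}{\sin x}+\cos x>4+\sum_{k=1}^{m}c_k x^{2k}.$$
   Context: $B_j$ are the Bernoulli numbers ($B_2=1/6$, $B_4=-1/30$, $B_6=1/42,\dots$). The quantity $3\pi/2$ is the value at $x=\pi/2$ of $3x/\sin x+\cos x$. *)

theory Defs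
  imports Complex_Main
begin

text \<open>Bernoulli numbers, via the standard recurrence
  sum_{j<=n} (n+1 choose j) B_j = 0 for n >= 1, B_0 = 1 (so B_1 = -1/2, B_2 = 1/6, B_4 = -1/30).\<close>
fun bernoulli :: "nat \<Rightarrow> real" where
  "bernoulli n = (if n = 0 then 1
     else - (\<Sum>j<n. real (Suc n choose j) * bernoulli j) / real (Suc n))"

declare bernoulli.simps [simp del]

definition c_coeff :: "nat \<Rightarrow> real" where
  "c_coeff k = (3 * \<bar>bernoulli (2*k)\<bar> * (2 ^ (2*k) - 2) + (-1) ^ k) / fact (2*k)"

end

theory Submission imports Defs "HOL-Computational_Algebra.Formal_Power_Series" begin

(*
  The function 3x/sin x + cos x has the power series 4 + sum_{k>=1} c_k x^(2k), convergent
  for x^2 < 6, and c_k > 0 for k >= 2. Indeed c_k = 3 a_k + (-1)^k/(2k)!, where a_k is the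
  coefficient of x/sin x and equals (1 - 2/4^k) e_k, with e_k the coefficient of 1 - x cot x.
  The Bernoulli generating function shows that (x/2) coth (x/2) satisfies a Riccati equation,
  which becomes the convolution recurrence (2k+1) e_k = [k = 1] + sum_{0<j<k} e_j e_(k-j).
  It gives 0 < e_k <= 2/6^k and, through the single term e_1 e_(k-1), e_k >= 1/(2 (2k)!).

  Since the coefficients are positive from x^(2m) on, dropping the tail gives the lower bound.
  For the upper bound, each tail term c_k x^(2k) is at most (2x/pi)^(2m) c_k (pi/2)^(2k),
  strictly for k = m + 1, and the whole tail at pi/2 is 3 pi/2 minus the partial sum there.
*)

unbundle fps_syntax

lemma sum_even_indices:
  fixes f :: "nat \<Rightarrow> 'a::comm_monoid_add"
  assumes "finite A" "\<And>i. i \<in> A \<Longrightarrow> odd i \<Longrightarrow> f i = 0"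
  shows "sum f A = (\<Sum>j | 2 * j \<in> A. f (2 * j))"
proof -
  have "sum f A = sum f (A \<inter> {i. even i})"
    using assms by (intro sum.mono_neutral_right) auto
  also have "A \<inter> {i. even i} = (\<lambda>j. 2 * j) ` {j. 2 * j \<in> A}" by auto
  also have "sum f \<dots> = (\<Sum>j | 2 * j \<in> A. f (2 * j))"
    by (subst sum.reindex) (auto simp: inj_on_def)
  finally show ?thesis .
qed

lemma sinc_sums:
  fixes x :: real
  assumes "x \<noteq> 0"
  shows "(\<lambda>k. (-1) ^ k / fact (2 * k + 1) * (x\<^sup>2) ^ k) sums (sin x / x)"
proof -
  have "(\<lambda>k. (-1) ^ k / fact (2 * k + 1) * x ^ (2 * k + 1) / x) sums (sin x / x)"
    by (rule sums_divide[OF sin_paired])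
  thus ?thesis
    using assms by (simp add: power_mult)
qed

lemma power_series_gt_partial_sum:
  fixes c :: "nat \<Rightarrow> real"
  assumes "(\<lambda>k. c k * y ^ k) sums f" and "0 < y" and "\<And>k. k \<ge> n \<Longrightarrow> 0 < c k"
  shows "(\<Sum>k<n. c k * y ^ k) < f"
proof -
  have "(\<Sum>k<n. c k * y ^ k) < (\<Sum>k. c k * y ^ k)"
    using assms(2,3) by (intro sum_less_suminf sums_summable[OF assms(1)]) simp
  thus ?thesis
    using sums_unique[OF assms(1)] by simp
qed

lemma power_series_lt_scaled_tail:
  fixes c :: "nat \<Rightarrow> real"
  assumes f: "(\<lambda>k. c k * y ^ k) sums f" and F: "(\<lambda>k. c k * Y ^ k) sums F"
    and "0 < y" and "y < Y" and pos: "\<And>k. k \<ge> n \<Longrightarrow> 0 < c k"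
  shows "f < (\<Sum>k<n. c k * y ^ k) + (y / Y) ^ n * (F - (\<Sum>k<n. c k * Y ^ k))"
proof -
  define r where "r = (y / Y) ^ n"
  let ?g = "\<lambda>k. r * (c k * Y ^ k) - c k * y ^ k"
  have g: "?g sums (r * F - f)"
    by (intro sums_diff sums_mult f F)
  have g_eq: "?g k = c k * y ^ n * (Y ^ (k - n) - y ^ (k - n))" if "k \<ge> n" for k
  proof -
    have Yk: "Y ^ k = Y ^ n * Y ^ (k - n)" and yk: "y ^ k = y ^ n * y ^ (k - n)"
      using that by (simp_all flip: power_add)
    have rY: "r * Y ^ n = y ^ n"
      using \<open>0 < y\<close> \<open>y < Y\<close> by (simp add: r_def power_divide)
    have "?g k = c k * ((r * Y ^ n) * Y ^ (k - n) - y ^ n * y ^ (k - n))"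
      unfolding Yk yk by (simp add: algebra_simps)
    thus ?thesis
      unfolding rY by (simp add: algebra_simps)
  qed
  have "(\<Sum>k<n. ?g k) < r * F - f"
  proof (rule sum_less_suminf2[of ?g n "Suc n", unfolded sums_unique[OF g, symmetric]])
    show "summable ?g" using g by (rule sums_summable)
    show "0 \<le> ?g k" if "k \<ge> n" for k
      using that pos[OF that] \<open>0 < y\<close> \<open>y < Y\<close> by (simp add: g_eq power_mono)
    have "0 < c (Suc n) * y ^ n * (Y ^ (Suc n - n) - y ^ (Suc n - n))"
      using pos[of "Suc n"] \<open>0 < y\<close> \<open>y < Y\<close> by simp
    thus "0 < ?g (Suc n)"
      by (simp only: g_eq[of "Suc n"] le_SucI order_refl)
  qed simp
  thus ?thesis
    by (simp add: r_def sum_subtractf sum_distrib_left algebra_simps)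
qed

lemma fact_add_two_ge:
  assumes "n \<ge> 2"
  shows "3 * (2 * real n + 3) * fact (2 * n) \<le> fact (2 * n + 2)"
proof -
  have "(2::real) * 2 \<le> real n * real n"
    using assms by (intro mult_mono) auto
  hence "3 * (2 * real n + 3) \<le> (2 * real n + 2) * (2 * real n + 1)"
    by (simp add: algebra_simps)
  hence "3 * (2 * real n + 3) * fact (2 * n) \<le> (2 * real n + 2) * (2 * real n + 1) * fact (2 * n)"
    by (rule mult_right_mono) simp
  also have "\<dots> = fact (2 * n + 2)"
    by (simp add: algebra_simps)
  finally show ?thesis .
qed

lemma bernoulli_0 [simp]: "bernoulli 0 = 1"
  by (simp add: bernoulli.simps)

lemma bernoulli_1: "bernoulli 1 = -1/2"
  by (simp add: bernoulli.simps)

lemma bernoulli_recurrence: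
  assumes "n \<ge> 2"
  shows "(\<Sum>j<n. real (n choose j) * bernoulli j) = 0"
proof -
  obtain m where m: "n = Suc m" "m \<ge> 1" using assms by (cases n) auto
  have "real (Suc m) * bernoulli m = - (\<Sum>j<m. real (Suc m choose j) * bernoulli j)"
    using m by (subst bernoulli.simps) simp
  thus ?thesis using m by (simp add: add.commute)
qed

definition bernoulli_fps :: "real fps" where
  "bernoulli_fps = Abs_fps (\<lambda>n. bernoulli n / fact n)"

lemma bernoulli_fps_mult_exp: "bernoulli_fps * (fps_exp 1 - 1) = fps_X"
proof (rule fps_ext)
  fix n
  show "(bernoulli_fps * (fps_exp 1 - 1)) $ n = fps_X $ n"
  proof (cases "n \<ge> 2")
    case True
    have "(bernoulli_fps * (fps_exp 1 - 1)) $ n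
        = (\<Sum>i<n. bernoulli i / fact i * (1 / fact (n - i)))"
      unfolding fps_mult_nth bernoulli_fps_def atLeast0AtMost
      by (rule sum.mono_neutral_cong_right) auto
    also have "\<dots> = (\<Sum>i<n. real (n choose i) * bernoulli i) / fact n"
      by (simp add: sum_divide_distrib binomial_fact field_simps)
    finally show ?thesis using True bernoulli_recurrence[OF True] by simp
  next
    case False
    then have "n = 0 \<or> n = 1" by auto
    then show ?thesis by (auto simp: fps_mult_nth bernoulli_fps_def)
  qed
qed

text \<open>The coefficients of \<open>(x/2) coth (x/2) = x/(e\<^sup>x - 1) + x/2\<close>.\<close>
definition xcoth_coeff :: "nat \<Rightarrow> real" where
  "xcoth_coeff n = bernoulli n / fact n + (if n = 1 then 1/2 else 0)"

definition xcoth_fps :: "real fps" where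
  "xcoth_fps = Abs_fps xcoth_coeff"

lemma xcoth_coeff_0 [simp]: "xcoth_coeff 0 = 1"
  by (simp add: xcoth_coeff_def)

lemma xcoth_coeff_1 [simp]: "xcoth_coeff (Suc 0) = 0"
  using bernoulli_1 by (simp add: xcoth_coeff_def)

lemma xcoth_fps_mult_exp: "2 * xcoth_fps * (fps_exp 1 - 1) = fps_X * (fps_exp 1 + 1)"
proof -
  have "xcoth_fps = bernoulli_fps + fps_const (1/2) * fps_X"
    by (rule fps_ext) (simp add: xcoth_fps_def bernoulli_fps_def xcoth_coeff_def)
  moreover have "2 * fps_const (1/2) = (1 :: real fps)"
    by (simp add: numeral_fps_const)
  ultimately show ?thesis
    using bernoulli_fps_mult_exp by algebra
qed

lemma xcoth_fps_riccati:
  "4 * (fps_X * fps_deriv xcoth_fps) = 4 * xcoth_fps + fps_X ^ 2 - 4 * xcoth_fps ^ 2"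
proof -
  let ?E = "fps_exp 1 :: real fps"
  have "fps_deriv (2 * xcoth_fps * (?E - 1)) = fps_deriv (fps_X * (?E + 1))"
    by (simp only: xcoth_fps_mult_exp)
  hence "2 * fps_deriv xcoth_fps * (?E - 1) + 2 * xcoth_fps * ?E = ?E + 1 + fps_X * ?E"
    by (simp add: fps_deriv_mult) algebra
  \<comment> \<open>eliminate \<open>e\<^sup>x\<close> between the identity and its derivative\<close>
  hence "(4 * (fps_X * fps_deriv xcoth_fps)) * (?E - 1) ^ 2
      = (4 * xcoth_fps + fps_X ^ 2 - 4 * xcoth_fps ^ 2) * (?E - 1) ^ 2"
    using xcoth_fps_mult_exp by algebra
  moreover have "?E - 1 \<noteq> 0"
  proof
    assume "?E - 1 = 0"
    hence "(?E - 1) $ 1 = 0" by simp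
    thus False by simp
  qed
  ultimately show ?thesis by simp
qed

lemma xcoth_coeff_recurrence:
  assumes "n \<ge> 2"
  shows "4 * (real n + 1) * xcoth_coeff n
           = (if n = 2 then 1 else 0) - 4 * (\<Sum>i=1..n-1. xcoth_coeff i * xcoth_coeff (n - i))"
proof -
  let ?g = xcoth_coeff
  have four: "(4 * f) $ k = 4 * f $ k" for f :: "real fps" and k
    by (simp add: numeral_fps_const)
  have "(4 * (fps_X * fps_deriv xcoth_fps)) $ n
      = (4 * xcoth_fps + fps_X ^ 2 - 4 * xcoth_fps ^ 2) $ n"
    by (simp only: xcoth_fps_riccati)
  hence "4 * (real n * ?g n) = 4 * ?g n + (if n = 2 then 1 else 0) - 4 * (\<Sum>i=0..n. ?g i * ?g (n - i))"
    unfolding fps_add_nth fps_sub_nth four power2_eq_square[of xcoth_fps]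
    by (simp add: fps_mult_fps_X_deriv_shift fps_mult_nth xcoth_fps_def)
  moreover have "(\<Sum>i=0..n. ?g i * ?g (n - i)) = 2 * ?g n + (\<Sum>i=1..n-1. ?g i * ?g (n - i))"
  proof -
    obtain p where p: "n = Suc p" "p \<ge> 1" using assms by (cases n) auto
    have "(\<Sum>i=0..Suc p. ?g i * ?g (Suc p - i))
        = ?g 0 * ?g (Suc p) + ((\<Sum>i=1..p. ?g i * ?g (Suc p - i)) + ?g (Suc p) * ?g 0)"
      by (simp add: sum.atLeast_Suc_atMost)
    thus ?thesis using p by simp
  qed
  ultimately show ?thesis by (simp add: algebra_simps)
qed

lemma xcoth_coeff_odd: "odd n \<Longrightarrow> xcoth_coeff n = 0"
proof (induction n rule: less_induct)
  case (less n)
  show ?case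
  proof (cases "n = 1")
    case False
    with less.prems have n3: "n \<ge> 3" by presburger
    have "xcoth_coeff i * xcoth_coeff (n - i) = 0" if "i \<in> {1..n-1}" for i
      using that less by (cases "odd i") auto
    hence "(\<Sum>i=1..n-1. xcoth_coeff i * xcoth_coeff (n - i)) = 0"
      by (intro sum.neutral) blast
    with xcoth_coeff_recurrence[of n] n3 show ?thesis by auto
  qed simp
qed

text \<open>For \<open>k \<ge> 1\<close>, the coefficient of \<open>x\<^sup>2\<^sup>k\<close> in \<open>1 - x cot x\<close>.\<close>
definition cot_coeff :: "nat \<Rightarrow> real" where
  "cot_coeff k = (-1) ^ (k + 1) * 4 ^ k * xcoth_coeff (2 * k)"

lemma xcoth_coeff_even: "xcoth_coeff (2 * k) = (-1) ^ (k + 1) * cot_coeff k / 4 ^ k"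
proof -
  have "(-1::real) ^ (k + 1) * (-1) ^ (k + 1) = 1"
    by (simp flip: power_mult_distrib)
  thus ?thesis by (simp add: cot_coeff_def field_simps)
qed

lemma cot_coeff_recurrence:
  assumes "k \<ge> 1"
  shows "(2 * real k + 1) * cot_coeff k
           = (if k = 1 then 1 else 0) + (\<Sum>j=1..k-1. cot_coeff j * cot_coeff (k - j))"
proof -
  let ?g = xcoth_coeff and ?e = cot_coeff and ?S = "\<Sum>j=1..k-1. cot_coeff j * cot_coeff (k - j)"
  have "(\<Sum>i=1..2*k-1. ?g i * ?g (2*k - i))
      = (\<Sum>j | 2 * j \<in> {1..2*k-1}. ?g (2*j) * ?g (2*k - 2*j))"
    by (rule sum_even_indices) (auto simp: xcoth_coeff_odd)
  also have "{j. 2 * j \<in> {1..2*k-1}} = {1..k-1}" by auto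
  also have "(\<Sum>j=1..k-1. ?g (2*j) * ?g (2*k - 2*j))
      = (\<Sum>j=1..k-1. (-1) ^ k * (?e j * ?e (k - j)) / 4 ^ k)"
  proof (rule sum.cong)
    fix j assume "j \<in> {1..k-1}"
    hence j: "j + (k - j) = k" "2*k - 2*j = 2 * (k - j)" by auto
    have "(-1::real) ^ (j + 1) * (-1) ^ (k - j + 1) = (-1) ^ k"
      using j by (simp flip: power_add)
    moreover have "(4::real) ^ j * 4 ^ (k - j) = 4 ^ k"
      using j by (simp flip: power_add)
    ultimately show "?g (2*j) * ?g (2*k - 2*j) = (-1) ^ k * (?e j * ?e (k - j)) / 4 ^ k"
      unfolding j(2) xcoth_coeff_even by (simp add: field_simps)
  qed simp
  finally have "(\<Sum>i=1..2*k-1. ?g i * ?g (2*k - i)) = (-1) ^ k / 4 ^ k * ?S"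
    by (simp add: sum_distrib_left)
  with xcoth_coeff_recurrence[of "2*k"] assms
  have "4 * (2 * real k + 1) * ((-1) ^ (k + 1) * ?e k / 4 ^ k)
      = (if k = 1 then 1 else 0) - 4 * ((-1) ^ k / 4 ^ k * ?S)"
    (is "?L = ?R") by (simp add: xcoth_coeff_even)
  moreover have "(-1) ^ (k + 1) * 4 ^ k / 4 * ?L = (2 * real k + 1) * ?e k"
    by (cases "even k") simp_all
  moreover have "(-1) ^ (k + 1) * 4 ^ k / 4 * ?R = (if k = 1 then 1 else 0) + ?S"
    by (cases "even k") (auto simp: field_simps)
  ultimately show ?thesis by simp
qed

lemma cot_coeff_1 [simp]: "cot_coeff (Suc 0) = 1/3"
  using cot_coeff_recurrence[of 1] by simp

lemma cot_coeff_pos: "k \<ge> 1 \<Longrightarrow> cot_coeff k > 0"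
proof (induction k rule: less_induct)
  case (less k)
  show ?case
  proof (cases "k = 1")
    case False
    have "(\<Sum>j=1..k-1. cot_coeff j * cot_coeff (k - j)) > 0"
      using False less by (intro sum_pos) (auto intro!: less.IH)
    with cot_coeff_recurrence[of k] less.prems False
    have "(2 * real k + 1) * cot_coeff k > 0" by simp
    thus ?thesis by (simp add: zero_less_mult_iff)
  qed simp
qed

lemma cot_coeff_le: "k \<ge> 1 \<Longrightarrow> cot_coeff k \<le> 2 / 6 ^ k"
proof (induction k rule: less_induct)
  case (less k)
  show ?case
  proof (cases "k = 1")
    case False
    have "cot_coeff j * cot_coeff (k - j) \<le> 4 / 6 ^ k" if j: "j \<in> {1..k-1}" for j
    proof -
      have "cot_coeff j * cot_coeff (k - j) \<le> (2 / 6 ^ j) * (2 / 6 ^ (k - j))"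
        using j less cot_coeff_pos[of j] cot_coeff_pos[of "k - j"]
        by (intro mult_mono less.IH) (auto simp: le_diff_conv2)
      also have "\<dots> = 4 / (6 ^ j * 6 ^ (k - j))"
        by simp
      also have "(6::real) ^ j * 6 ^ (k - j) = 6 ^ k"
        using j by (simp flip: power_add) linarith
      finally show ?thesis .
    qed
    hence "(\<Sum>j=1..k-1. cot_coeff j * cot_coeff (k - j)) \<le> real (card {1..k-1}) * (4 / 6 ^ k)"
      by (intro sum_bounded_above) auto
    also have "\<dots> \<le> (2 * real k + 1) * (2 / 6 ^ k)"
      using less.prems by (simp add: field_simps)
    finally have "(2 * real k + 1) * cot_coeff k \<le> (2 * real k + 1) * (2 / 6 ^ k)"
      using cot_coeff_recurrence[of k] less.prems False by simp
    thus ?thesis by (rule mult_left_le_imp_le) simp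
  qed simp
qed

lemma cot_coeff_ge: "k \<ge> 1 \<Longrightarrow> cot_coeff k \<ge> 1 / (2 * fact (2 * k))"
proof (induction k rule: less_induct)
  case (less k)
  consider "k = 1" | "k = 2" | "k \<ge> 3"
    using less.prems by linarith
  thus ?case
  proof cases
    case 1
    thus ?thesis by simp
  next
    case 2
    thus ?thesis
      using cot_coeff_recurrence[of 2] by (simp add: eval_nat_numeral)
  next
    case 3
    then obtain n where n: "k = Suc n" "n \<ge> 2" by (cases k) auto
    have "cot_coeff 1 * cot_coeff (k - 1) \<le> (\<Sum>j=1..n. cot_coeff j * cot_coeff (k - j))"
    proof (rule member_le_sum)
      fix j assume "j \<in> {1..n} - {1}"
      hence "1 \<le> j" "1 \<le> k - j" using n by auto
      thus "0 \<le> cot_coeff j * cot_coeff (k - j)"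
        using cot_coeff_pos by (simp add: less_imp_le)
    qed (use n in auto)
    moreover have "1 / 3 * (1 / (2 * fact (2 * n))) \<le> cot_coeff 1 * cot_coeff (k - 1)"
      using n less.IH[of n] by simp
    moreover have "(2 * real k + 1) * (1 / (2 * fact (2 * k))) \<le> 1 / 3 * (1 / (2 * fact (2 * n)))"
      using fact_add_two_ge[OF n(2)] n(1) by (simp add: divide_simps)
    moreover have "(2 * real k + 1) * cot_coeff k = (\<Sum>j=1..n. cot_coeff j * cot_coeff (k - j))"
      using cot_coeff_recurrence[of k] n by simp
    ultimately have "(2 * real k + 1) * (1 / (2 * fact (2 * k))) \<le> (2 * real k + 1) * cot_coeff k"
      by linarith
    thus ?thesis by (rule mult_left_le_imp_le) simp
  qed
qed

text \<open>The coefficient of \<open>x\<^sup>2\<^sup>k\<close> in \<open>x / sin x\<close>: the coefficients of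
  \<open>x / sinh x = 2 (x/2) coth (x/2) - x coth x\<close>, with alternating signs.\<close>
definition xcsc_coeff :: "nat \<Rightarrow> real" where
  "xcsc_coeff k = (-1) ^ k * (2 - 4 ^ k) * xcoth_coeff (2 * k)"

lemma xcsc_coeff_0 [simp]: "xcsc_coeff 0 = 1"
  by (simp add: xcsc_coeff_def)

lemma xcsc_coeff_eq_cot_coeff: "xcsc_coeff k = (1 - 2 / 4 ^ k) * cot_coeff k"
  unfolding xcsc_coeff_def xcoth_coeff_even by (cases "even k") (simp_all add: field_simps)

lemma xcsc_coeff_nonneg: "0 \<le> xcsc_coeff k"
proof (cases "k = 0")
  case False
  hence "(4::real) ^ 1 \<le> 4 ^ k" by (intro power_increasing) auto
  thus ?thesis using False cot_coeff_pos[of k] by (simp add: xcsc_coeff_eq_cot_coeff)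
qed simp

lemma xcsc_coeff_le: "xcsc_coeff k \<le> 2 / 6 ^ k"
proof (cases "k = 0")
  case False
  hence "xcsc_coeff k \<le> cot_coeff k"
    using cot_coeff_pos[of k] by (simp add: xcsc_coeff_eq_cot_coeff)
  thus ?thesis using cot_coeff_le[of k] False by simp
qed simp

lemma xcsch_fps_mult_sinh:
  "(2 * xcoth_fps - (xcoth_fps oo (fps_const 2 * fps_X))) * (fps_exp 1 - fps_exp (-1)) = 2 * fps_X"
proof -
  let ?E = "fps_exp 1 :: real fps" and ?c = "fps_const 2 * fps_X :: real fps"
  have "(2 * xcoth_fps * (?E - 1)) oo ?c = (fps_X * (?E + 1)) oo ?c"
    by (simp only: xcoth_fps_mult_exp)
  hence "2 * (xcoth_fps oo ?c) * (?E * ?E - 1) = 2 * fps_X * (?E * ?E + 1)"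
    by (simp add: fps_compose_mult_distrib fps_compose_sub_distrib fps_compose_add_distrib
        numeral_fps_const flip: fps_exp_add_mult)
  moreover have "fps_exp (-1) * ?E = 1"
    by (simp flip: fps_exp_add_mult)
  ultimately show ?thesis
    using xcoth_fps_mult_exp by algebra
qed

lemma xcsc_sinc_convolution:
  "(\<Sum>j\<le>N. xcsc_coeff j * ((-1) ^ (N - j) / fact (2 * (N - j) + 1))) = (if N = 0 then 1 else 0)"
proof -
  let ?S = "2 * xcoth_fps - (xcoth_fps oo (fps_const 2 * fps_X))"
    and ?D = "fps_exp 1 - fps_exp (-1) :: real fps"
  have S: "?S $ i = (2 - 2 ^ i) * xcoth_coeff i" for i
    by (simp add: xcoth_fps_def numeral_fps_const left_diff_distrib)
  have D: "?D $ (2 * m + 1) = 2 / fact (2 * m + 1)" for m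
    by (simp add: diff_divide_distrib algebra_simps)
  have "(if N = 0 then 2 else 0) = (2 * fps_X :: real fps) $ (2 * N + 1)"
    by (simp add: numeral_fps_const)
  also have "\<dots> = (\<Sum>i=0..2*N+1. ?S $ i * ?D $ (2 * N + 1 - i))"
    by (simp only: xcsch_fps_mult_sinh [symmetric] fps_mult_nth)
  also have "\<dots> = (\<Sum>j | 2 * j \<in> {0..2*N+1}. ?S $ (2 * j) * ?D $ (2 * N + 1 - 2 * j))"
    by (rule sum_even_indices) (auto simp: S xcoth_coeff_odd)
  also have "{j. 2 * j \<in> {0..2*N+1}} = {..N}" by auto
  also have "(\<Sum>j\<le>N. ?S $ (2 * j) * ?D $ (2 * N + 1 - 2 * j))
      = (\<Sum>j\<le>N. 2 * ((-1) ^ N * (xcsc_coeff j * ((-1) ^ (N - j) / fact (2 * (N - j) + 1)))))"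
  proof (rule sum.cong)
    fix j assume "j \<in> {..N}"
    hence j: "2 * N + 1 - 2 * j = 2 * (N - j) + 1" "(-1::real) ^ j * (-1) ^ (N - j) = (-1) ^ N"
      by (auto simp flip: power_add)
    have "(-1) ^ N * (xcsc_coeff j * ((-1) ^ (N - j) / fact (2 * (N - j) + 1)))
        = ((-1) ^ N * ((-1) ^ j * (-1) ^ (N - j)))
            * ((2 - 4 ^ j) * xcoth_coeff (2 * j) / fact (2 * (N - j) + 1))"
      by (simp add: xcsc_coeff_def)
    also have "(-1::real) ^ N * ((-1) ^ j * (-1) ^ (N - j)) = 1"
      unfolding j(2) by (simp flip: power_mult_distrib)
    finally show "?S $ (2 * j) * ?D $ (2 * N + 1 - 2 * j)
        = 2 * ((-1) ^ N * (xcsc_coeff j * ((-1) ^ (N - j) / fact (2 * (N - j) + 1))))"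
      unfolding j(1) S D by (simp add: power_mult)
  qed simp
  finally have "(if N = 0 then 2 else 0)
      = 2 * ((-1) ^ N * (\<Sum>j\<le>N. xcsc_coeff j * ((-1) ^ (N - j) / fact (2 * (N - j) + 1))))"
    by (simp only: sum_distrib_left)
  thus ?thesis
    by (cases "N = 0") simp_all
qed

lemma xcsc_sums:
  fixes x :: real
  assumes "x \<noteq> 0" and "x\<^sup>2 < 6"
  shows "(\<lambda>k. xcsc_coeff k * (x\<^sup>2) ^ k) sums (x / sin x)"
proof -
  let ?a = "\<lambda>k. xcsc_coeff k * (x\<^sup>2) ^ k" and ?b = "\<lambda>k. (-1) ^ k / fact (2 * k + 1) * (x\<^sup>2) ^ k"
  have a: "summable (\<lambda>k. norm (?a k))"
  proof (rule summable_comparison_test')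
    show "summable (\<lambda>k. 2 * (x\<^sup>2 / 6) ^ k)"
      using assms(2) by (intro summable_mult summable_geometric) simp
    fix k
    have "norm (norm (?a k)) = xcsc_coeff k * (x\<^sup>2) ^ k"
      using xcsc_coeff_nonneg[of k] by simp
    also have "\<dots> \<le> 2 / 6 ^ k * (x\<^sup>2) ^ k"
      using xcsc_coeff_le[of k] by (intro mult_right_mono) auto
    finally show "norm (norm (?a k)) \<le> 2 * (x\<^sup>2 / 6) ^ k"
      by (simp add: power_divide)
  qed
  have b: "summable (\<lambda>k. norm (?b k))"
  proof (rule summable_comparison_test')
    show "summable (\<lambda>k. inverse (fact k) * (x\<^sup>2) ^ k)"
      using summable_exp[of "x\<^sup>2"] by simp
    fix k
    have "fact k \<le> (fact (2 * k + 1) :: real)"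
      by (intro fact_mono) auto
    hence "1 / fact (2 * k + 1) * (x\<^sup>2) ^ k \<le> inverse (fact k) * (x\<^sup>2) ^ k"
      by (intro mult_right_mono) (simp_all add: divide_simps)
    thus "norm (norm (?b k)) \<le> inverse (fact k) * (x\<^sup>2) ^ k"
      by (simp add: abs_mult)
  qed
  have "(\<Sum>i\<le>N. ?a i * ?b (N - i)) = (if N = 0 then 1 else 0)" for N
  proof -
    have "(\<Sum>i\<le>N. ?a i * ?b (N - i))
        = (x\<^sup>2) ^ N * (\<Sum>i\<le>N. xcsc_coeff i * ((-1) ^ (N - i) / fact (2 * (N - i) + 1)))"
      unfolding sum_distrib_left
    proof (rule sum.cong)
      fix i assume "i \<in> {..N}"
      hence "(x\<^sup>2) ^ i * (x\<^sup>2) ^ (N - i) = (x\<^sup>2) ^ N"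
        by (simp flip: power_add)
      thus "?a i * ?b (N - i) = (x\<^sup>2) ^ N * (xcsc_coeff i * ((-1) ^ (N - i) / fact (2 * (N - i) + 1)))"
        by (simp add: algebra_simps)
    qed simp
    thus ?thesis
      unfolding xcsc_sinc_convolution by simp
  qed
  hence "(\<lambda>N. if N = 0 then 1 else 0) sums (suminf ?a * (sin x / x))"
    using Cauchy_product_sums[OF a b] sums_unique[OF sinc_sums[OF assms(1)]] by simp
  hence prod: "suminf ?a * (sin x / x) = 1"
    using sums_single[of 0 "\<lambda>_. 1::real"] sums_unique2 by fastforce
  hence "sin x \<noteq> 0" by auto
  hence "suminf ?a = x / sin x"
    using prod assms(1) by (simp add: field_simps)
  thus ?thesis
    using summable_sums[OF summable_norm_cancel[OF a]] by simp
qed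

definition csc_cos_coeff :: "nat \<Rightarrow> real" where
  "csc_cos_coeff k = 3 * xcsc_coeff k + (-1) ^ k / fact (2 * k)"

lemma csc_cos_sums:
  fixes x :: real
  assumes "x \<noteq> 0" and "x\<^sup>2 < 6"
  shows "(\<lambda>k. csc_cos_coeff k * (x\<^sup>2) ^ k) sums (3 * (x / sin x) + cos x)"
proof -
  have "(\<lambda>k. 3 * (xcsc_coeff k * (x\<^sup>2) ^ k) + (-1) ^ k / fact (2 * k) * x ^ (2 * k))
          sums (3 * (x / sin x) + cos x)"
    by (intro sums_add sums_mult xcsc_sums[OF assms] cos_paired)
  thus ?thesis
    unfolding power_mult by (simp add: csc_cos_coeff_def algebra_simps)
qed

lemma c_coeff_eq_csc_cos_coeff:
  assumes "k \<ge> 1"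
  shows "c_coeff k = csc_cos_coeff k"
proof -
  have "\<bar>bernoulli (2 * k)\<bar> = \<bar>xcoth_coeff (2 * k)\<bar> * fact (2 * k)"
    using assms by (simp add: xcoth_coeff_def abs_mult)
  also have "\<bar>xcoth_coeff (2 * k)\<bar> = cot_coeff k / 4 ^ k"
    using cot_coeff_pos[OF assms] by (simp add: xcoth_coeff_even abs_mult)
  finally have "\<bar>bernoulli (2 * k)\<bar> = cot_coeff k / 4 ^ k * fact (2 * k)" .
  moreover have "(2::real) ^ (2 * k) = 4 ^ k"
    by (simp add: power_mult)
  ultimately show ?thesis
    by (simp add: c_coeff_def csc_cos_coeff_def xcsc_coeff_eq_cot_coeff field_simps)
qed

lemma csc_cos_coeff_pos:
  assumes "k \<ge> 2"
  shows "csc_cos_coeff k > 0"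
proof -
  have "(4::real) ^ 2 \<le> 4 ^ k"
    using assms by (intro power_increasing) auto
  hence "7 / 8 * cot_coeff k \<le> xcsc_coeff k"
    using cot_coeff_pos[of k] assms by (simp add: xcsc_coeff_eq_cot_coeff field_simps)
  moreover have "1 / (2 * fact (2 * k)) \<le> cot_coeff k"
    using cot_coeff_ge[of k] assms by simp
  moreover have "- 1 / fact (2 * k) \<le> (-1) ^ k / (fact (2 * k) :: real)"
    by (intro divide_right_mono) (auto simp: minus_one_power_iff)
  ultimately have "3 * (7 / 8) * (1 / (2 * fact (2 * k))) - 1 / fact (2 * k) \<le> csc_cos_coeff k"
    unfolding csc_cos_coeff_def by linarith
  moreover have "0 < 3 * (7 / 8) * (1 / (2 * fact (2 * k))) - 1 / (fact (2 * k) :: real)"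
    by (simp add: field_simps)
  ultimately show ?thesis by linarith
qed

lemma csc_cos_coeff_partial_sum:
  fixes z :: real
  shows "(\<Sum>k<Suc n. csc_cos_coeff k * (z\<^sup>2) ^ k) = 4 + (\<Sum>k=1..n. c_coeff k * z ^ (2 * k))"
proof -
  have "(\<Sum>k<Suc n. csc_cos_coeff k * (z\<^sup>2) ^ k)
      = csc_cos_coeff 0 + (\<Sum>k=1..n. csc_cos_coeff k * (z\<^sup>2) ^ k)"
    unfolding lessThan_Suc_atMost atLeast0AtMost [symmetric] by (simp add: sum.atLeast_Suc_atMost)
  also have "(\<Sum>k=1..n. csc_cos_coeff k * (z\<^sup>2) ^ k) = (\<Sum>k=1..n. c_coeff k * z ^ (2 * k))"
    by (intro sum.cong) (simp_all add: c_coeff_eq_csc_cos_coeff power_mult)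
  finally show ?thesis
    by (simp add: csc_cos_coeff_def)
qed

theorem theorem6:
  fixes x :: real and m :: nat
  assumes "0 < x" and "x < pi / 2" and "m \<ge> 3"
  shows "4 + (\<Sum>k=1..m-1. c_coeff k * x ^ (2*k))
           + (2 * x / pi) ^ (2*m) * (3 * pi / 2 - 4 - (\<Sum>k=1..m-1. c_coeff k * (pi/2) ^ (2*k)))
         > 3 * (x / sin x) + cos x
       \<and> 3 * (x / sin x) + cos x > 4 + (\<Sum>k=1..m. c_coeff k * x ^ (2*k))"
proof -
  have "x\<^sup>2 < (pi / 2)\<^sup>2"
    using assms(1,2) by (intro power_strict_mono) auto
  moreover have "(pi / 2)\<^sup>2 < 2\<^sup>2"
    using pi_half_less_two by (intro power_strict_mono) auto
  ultimately have x2: "x\<^sup>2 < (pi / 2)\<^sup>2" "x\<^sup>2 < 6" "(pi / 2)\<^sup>2 < 6" by simp_all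
  have x0: "0 < x\<^sup>2"
    using assms(1) by simp
  have f: "(\<lambda>k. csc_cos_coeff k * (x\<^sup>2) ^ k) sums (3 * (x / sin x) + cos x)"
    using assms(1) x2 by (intro csc_cos_sums) auto
  have F: "(\<lambda>k. csc_cos_coeff k * ((pi / 2)\<^sup>2) ^ k) sums (3 * pi / 2)"
    using csc_cos_sums[of "pi / 2"] x2 by simp
  have pos: "0 < csc_cos_coeff k" if "k \<ge> m" for k
    using that assms(3) by (intro csc_cos_coeff_pos) simp
  have partial: "(\<Sum>k<m. csc_cos_coeff k * (z\<^sup>2) ^ k) = 4 + (\<Sum>k=1..m-1. c_coeff k * z ^ (2 * k))" for z
    using csc_cos_coeff_partial_sum[where n = "m - 1"] assms(3) by simp
  have ratio: "(2 * x / pi) ^ (2 * m) = (x\<^sup>2 / (pi / 2)\<^sup>2) ^ m"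
    by (simp add: power_mult power_divide)
  show ?thesis
    using power_series_lt_scaled_tail[where n = m, OF f F x0 x2(1) pos]
      power_series_gt_partial_sum[OF f x0, of "Suc m"] pos
    unfolding partial csc_cos_coeff_partial_sum ratio by (simp add: diff_diff_eq)
qed

end
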